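(* Let $\mathcal{X}$ and $\mathcal{Y}$ be finite sets, let $\Pr$ be a probability distribution on $\mathcal{X}$, let $\delta:\mathcal{X}\times\mathcal{Y}\to\mathbb{R}$, and let $\bar\pi,\pi_1,\dots,\pi_m$ be stochastic policies. Let $\mathcal{D}=\bigcup_{i=1}^m\mathcal{D}^i$ be a log dataset in which, for each $i$, $\mathcal{D}^i$ consists of $n_i$ samples $(x^i_j,y^i_j,\delta^i_j,p^i_j)$, $j=1,\dots,n_i$, where $x^i_j\sim\Pr$, $y^i_j\sim\pi_i(\cdot\mid x^i_j)$, $\delta^i_j=\delta(x^i_j,y^i_j)$, $p^i_j=\pi_i(y^i_j\mid x^i_j)$, all draws independent; let $n=\sum_i n_i$ and define the policy $\pi_{avg}(y\mid x)=\frac1n\sum_{i=1}^m n_i\pi_i(y\mid x)$. Assume $\pi_{avg}$ has support for $\bar\pi$. Then the balanced IPS estimator $$\hat U_{bal}(\bar\pi)=\frac1n\sum_{i=1}^m\sum_{j=1}^{n_i}\delta^i_j\,\frac{\bar\pi(y^i_j\mid x^i_j)}{\pi_{avg}(y^i_j\mid x^i_j)}$$ is unbiased: $\mathbb{E}_{\mathcal{D}}[\hat U_{bal}(\bar\pi)]=U(\bar\pi)$.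
   Context: A stochastic policy $\pi$ assigns to each $x\in\mathcal{X}$ a probability distribution $\pi(\cdot\mid x)$ on $\mathcal{Y}$. The utility of a policy is $U(\pi)=\sum_{x\in\mathcal{X},y\in\mathcal{Y}}\Pr(x)\pi(y\mid x)\delta(x,y)$. A policy $\pi$ has support for a policy $\pi'$ if for all $x\in\mathcal{X},y\in\mathcal{Y}$, $\delta(x,y)\pi'(y\mid x)\neq0$ implies $\pi(y\mid x)>0$. *)

theory Defs
  imports "HOL-Probability.Probability"
begin

text \<open>A (possibly non-stochastic-sampled) policy is also viewed as a real-valued
  kernel x y \<mapsto> \<pi>(y|x); the support notion is stated for such kernels.\<close>

definition utility :: "'x::finite pmf \<Rightarrow> ('x \<Rightarrow> 'y::finite \<Rightarrow> real) \<Rightarrow> ('x \<Rightarrow> 'y pmf) \<Rightarrow> real" where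
  "utility Pr \<delta> \<pi> = (\<Sum>x\<in>UNIV. \<Sum>y\<in>UNIV. pmf Pr x * pmf (\<pi> x) y * \<delta> x y)"

definition has_support :: "('x \<Rightarrow> 'y \<Rightarrow> real) \<Rightarrow> ('x \<Rightarrow> 'y \<Rightarrow> real) \<Rightarrow> ('x \<Rightarrow> 'y \<Rightarrow> real) \<Rightarrow> bool" where
  "has_support \<delta> \<pi> \<pi>' \<longleftrightarrow> (\<forall>x y. \<delta> x y * \<pi>' x y \<noteq> 0 \<longrightarrow> \<pi> x y > 0)"

text \<open>Logging policies are indexed by i < m (i.e. 0-based), with n_i = ns i samples each.\<close>

definition total_samples :: "nat \<Rightarrow> (nat \<Rightarrow> nat) \<Rightarrow> nat" where
  "total_samples m ns = (\<Sum>i<m. ns i)"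

definition pi_avg :: "nat \<Rightarrow> (nat \<Rightarrow> nat) \<Rightarrow> (nat \<Rightarrow> 'x \<Rightarrow> 'y pmf) \<Rightarrow> 'x \<Rightarrow> 'y \<Rightarrow> real" where
  "pi_avg m ns pis x y = (1 / real (total_samples m ns)) * (\<Sum>i<m. real (ns i) * pmf (pis i x) y)"

definition log_index :: "nat \<Rightarrow> (nat \<Rightarrow> nat) \<Rightarrow> (nat \<times> nat) set" where
  "log_index m ns = {(i, j). i < m \<and> j < ns i}"

text \<open>One logged sample: x \<sim> Pr, then y \<sim> \<pi>(\<cdot>|x). (\<delta> and the propensity are
  deterministic functions of (x,y).)\<close>
definition sample_pmf :: "'x pmf \<Rightarrow> ('x \<Rightarrow> 'y pmf) \<Rightarrow> ('x \<times> 'y) pmf" where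
  "sample_pmf Pr \<pi> = bind_pmf Pr (\<lambda>x. map_pmf (\<lambda>y. (x, y)) (\<pi> x))"

definition log_pmf :: "'x pmf \<Rightarrow> nat \<Rightarrow> (nat \<Rightarrow> nat) \<Rightarrow> (nat \<Rightarrow> 'x \<Rightarrow> 'y pmf) \<Rightarrow> (nat \<times> nat \<Rightarrow> 'x \<times> 'y) pmf" where
  "log_pmf Pr m ns pis = Pi_pmf (log_index m ns) undefined (\<lambda>(i, j). sample_pmf Pr (pis i))"

definition U_bal :: "('x \<Rightarrow> 'y \<Rightarrow> real) \<Rightarrow> nat \<Rightarrow> (nat \<Rightarrow> nat) \<Rightarrow> (nat \<Rightarrow> 'x \<Rightarrow> 'y pmf)
    \<Rightarrow> ('x \<Rightarrow> 'y pmf) \<Rightarrow> (nat \<times> nat \<Rightarrow> 'x \<times> 'y) \<Rightarrow> real" where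
  "U_bal \<delta> m ns pis \<pi>bar D =
     (1 / real (total_samples m ns)) *
     (\<Sum>i<m. \<Sum>j<ns i. (let (x, y) = D (i, j) in
        \<delta> x y * pmf (\<pi>bar x) y / pi_avg m ns pis x y))"

end

theory Submission
  imports Defs
begin

text \<open>Every logged pair of block \<open>i\<close> has law \<open>Pr(x) \<pi>_i(y|x)\<close>, so the expected sum
  of \<open>g\<close> over the whole log weighs \<open>g(x,y)\<close> by \<open>Pr(x) \<Sum>_i n_i \<pi>_i(y|x) = n Pr(x) \<pi>_avg(y|x)\<close>.
  For the importance weight \<open>g = \<delta> \<pi>bar / \<pi>_avg\<close> the factor \<open>\<pi>_avg\<close> cancels wherever
  \<open>\<delta> \<pi>bar \<noteq> 0\<close>, which is exactly where the support assumption makes it positive.\<close>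

lemma pmf_sample_pmf: "pmf (sample_pmf Pr \<pi>) (x, y) = pmf Pr x * pmf (\<pi> x) y"
proof -
  have "pmf (map_pmf (Pair x') (\<pi> x')) (x, y) = (if x' = x then pmf (\<pi> x) y else 0)" for x'
    by (cases "x' = x") (auto simp: pmf_map_inj' inj_def pmf_eq_0_set_pmf)
  then have "pmf (sample_pmf Pr \<pi>) (x, y) = (\<integral>x'. (if x' = x then pmf (\<pi> x) y else 0) \<partial>Pr)"
    by (simp add: sample_pmf_def pmf_bind)
  also have "\<dots> = (\<Sum>x'\<in>{x}. (if x' = x then pmf (\<pi> x) y else 0) * pmf Pr x')"
    by (rule integral_measure_pmf_real) (auto split: if_splits)
  finally show ?thesis by simp
qed

lemma expectation_sample_pmf:
  fixes Pr :: "'x::finite pmf" and \<pi> :: "'x \<Rightarrow> 'y::finite pmf" and g :: "'x \<times> 'y \<Rightarrow> real"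
  shows "measure_pmf.expectation (sample_pmf Pr \<pi>) g
           = (\<Sum>x\<in>UNIV. \<Sum>y\<in>UNIV. pmf Pr x * pmf (\<pi> x) y * g (x, y))"
proof -
  have "measure_pmf.expectation (sample_pmf Pr \<pi>) g = (\<Sum>z\<in>UNIV. g z * pmf (sample_pmf Pr \<pi>) z)"
    by (rule integral_measure_pmf_real) auto
  also have "\<dots> = (\<Sum>(x, y)\<in>UNIV \<times> UNIV. pmf Pr x * pmf (\<pi> x) y * g (x, y))"
    by (intro sum.cong) (auto simp: pmf_sample_pmf mult_ac)
  finally show ?thesis
    by (simp add: sum.cartesian_product)
qed

lemma finite_log_index: "finite (log_index m ns)"
proof (rule finite_subset)
  show "log_index m ns \<subseteq> (SIGMA i:{..<m}. {..<ns i})"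
    by (auto simp: log_index_def)
qed auto

lemma log_pmf_marginal:
  assumes "i < m" "j < ns i"
  shows "map_pmf (\<lambda>D. D (i, j)) (log_pmf Pr m ns pis) = sample_pmf Pr (pis i)"
  using assms Pi_pmf_component[OF finite_log_index, of "(i, j)" m ns undefined
      "\<lambda>(i, j). sample_pmf Pr (pis i)"]
  by (simp add: log_pmf_def log_index_def)

lemma expectation_log_pmf_sum:
  fixes Pr :: "'x::finite pmf" and pis :: "nat \<Rightarrow> 'x \<Rightarrow> 'y::finite pmf" and g :: "'x \<times> 'y \<Rightarrow> real"
  shows "measure_pmf.expectation (log_pmf Pr m ns pis) (\<lambda>D. \<Sum>i<m. \<Sum>j<ns i. g (D (i, j)))
           = (\<Sum>x\<in>UNIV. \<Sum>y\<in>UNIV. pmf Pr x * (\<Sum>i<m. real (ns i) * pmf (pis i x) y) * g (x, y))"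
proof -
  let ?L = "log_pmf Pr m ns pis"
  have integrable: "integrable ?L (\<lambda>D. g (D k))" for k
  proof -
    have "integrable (map_pmf (\<lambda>D. D k) ?L) g"
      by (rule integrable_measure_pmf_finite) simp
    then show ?thesis by simp
  qed
  have entry: "measure_pmf.expectation ?L (\<lambda>D. g (D (i, j)))
                 = (\<Sum>x\<in>UNIV. \<Sum>y\<in>UNIV. pmf Pr x * pmf (pis i x) y * g (x, y))"
    if "i < m" "j < ns i" for i j
    using integral_map_pmf[of "\<lambda>D. D (i, j)" ?L g]
    by (simp add: log_pmf_marginal[of i m j ns] that expectation_sample_pmf)
  have "measure_pmf.expectation ?L (\<lambda>D. \<Sum>i<m. \<Sum>j<ns i. g (D (i, j)))
          = (\<Sum>i<m. \<Sum>j<ns i. measure_pmf.expectation ?L (\<lambda>D. g (D (i, j))))"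
    by (simp add: Bochner_Integration.integral_sum integrable)
  also have "\<dots> = (\<Sum>i<m. real (ns i) * (\<Sum>x\<in>UNIV. \<Sum>y\<in>UNIV. pmf Pr x * pmf (pis i x) y * g (x, y)))"
    by (intro sum.cong refl) (simp add: entry)
  also have "\<dots> = (\<Sum>x\<in>UNIV. \<Sum>y\<in>UNIV. pmf Pr x * (\<Sum>i<m. real (ns i) * pmf (pis i x) y) * g (x, y))"
    by (simp add: sum_distrib_left sum_distrib_right sum.swap[of _ "{..<m}"] mult_ac)
  finally show ?thesis .
qed

lemma has_support_importance_weight:
  assumes "has_support \<delta> q (\<lambda>x y. pmf (\<pi> x) y)"
  shows "q x y * (\<delta> x y * pmf (\<pi> x) y / q x y) = pmf (\<pi> x) y * \<delta> x y"
proof (cases "\<delta> x y * pmf (\<pi> x) y = 0")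
  case False
  with assms have "q x y \<noteq> 0"
    unfolding has_support_def by force
  then show ?thesis by simp
qed auto

theorem proposition5p2:
  fixes Pr :: "'x::finite pmf"
    and \<delta> :: "'x \<Rightarrow> 'y::finite \<Rightarrow> real"
    and \<pi>bar :: "'x \<Rightarrow> 'y pmf"
    and pis :: "nat \<Rightarrow> 'x \<Rightarrow> 'y pmf"
    and m :: nat and ns :: "nat \<Rightarrow> nat"
  assumes "has_support \<delta> (pi_avg m ns pis) (\<lambda>x y. pmf (\<pi>bar x) y)"
  shows "measure_pmf.expectation (log_pmf Pr m ns pis) (U_bal \<delta> m ns pis \<pi>bar)
           = utility Pr \<delta> \<pi>bar"
proof -
  define w where "w = (\<lambda>(x, y). \<delta> x y * pmf (\<pi>bar x) y / pi_avg m ns pis x y)"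
  have "U_bal \<delta> m ns pis \<pi>bar
          = (\<lambda>D. 1 / real (total_samples m ns) * (\<Sum>i<m. \<Sum>j<ns i. w (D (i, j))))"
    by (rule ext) (simp add: U_bal_def w_def case_prod_unfold Let_def)
  then have "measure_pmf.expectation (log_pmf Pr m ns pis) (U_bal \<delta> m ns pis \<pi>bar)
               = 1 / real (total_samples m ns) * (\<Sum>x\<in>UNIV. \<Sum>y\<in>UNIV.
                   pmf Pr x * (\<Sum>i<m. real (ns i) * pmf (pis i x) y) * w (x, y))"
    by (simp only: Bochner_Integration.integral_mult_right_zero expectation_log_pmf_sum)
  also have "\<dots> = (\<Sum>x\<in>UNIV. \<Sum>y\<in>UNIV. pmf Pr x * (pi_avg m ns pis x y * w (x, y)))"
    by (simp add: pi_avg_def sum_distrib_left mult_ac)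
  also have "\<dots> = utility Pr \<delta> \<pi>bar"
    using has_support_importance_weight[OF assms]
    by (simp add: utility_def w_def mult.assoc)
  finally show ?thesis .
qed

end
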